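(* Let $G$ be an undirected graph and $n\ge 4$ an even integer. Then $G$ admits a homomorphism to the undirected cycle $C_{n-1}$ if and only if $G$ admits an acyclic orientation containing no induced subgraph isomorphic to a member of $F_n\setminus\{\overrightarrow{C}_3,\overrightarrow{C}_4\}$.
   Context: Graph homomorphisms are vertex maps sending edges to edges (for digraphs: arcs to arcs). An orientation of an undirected graph assigns exactly one direction to each edge; it is acyclic if it has no directed cycle. $\overrightarrow{C}_k$ is the directed cycle on $k$ vertices. For $n\ge 3$, $Q_n$ is the oriented path $(q_0,\dots,q_{n-1})$ on $n$ distinct vertices, with exactly one arc between $q_i$ and $q_{i+1}$ for each $i$ and no other arcs, such that: the first two arcs are $q_0\to q_1$ and $q_1\to q_2$; the subpath $(q_1,\dots,q_{n-2})$ is alternating (consecutive arcs have opposite directions); and the last two arcs have the same direction. For even $n\ge 4$, $F_n$ is the set (up to isomorphism) of oriented graphs $H$ for which there is a homomorphism $Q_n\to H$ that is surjective on vertices. *)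

theory Defs
  imports Main
begin

definition ugraph :: "'a set \<Rightarrow> ('a \<times> 'a) set \<Rightarrow> bool" where
  "ugraph V E \<longleftrightarrow> E \<subseteq> V \<times> V \<and> sym E \<and> irrefl E"

definition graph_hom ::
  "'a set \<Rightarrow> ('a \<times> 'a) set \<Rightarrow> 'b set \<Rightarrow> ('b \<times> 'b) set \<Rightarrow> ('a \<Rightarrow> 'b) \<Rightarrow> bool" where
  "graph_hom V E W F f \<longleftrightarrow> (\<forall>v\<in>V. f v \<in> W) \<and> (\<forall>(u,v)\<in>E. (f u, f v) \<in> F)"

definition cycle_edges :: "nat \<Rightarrow> (nat \<times> nat) set" where
  "cycle_edges m = {(i,j). i < m \<and> j < m \<and> (j = Suc i mod m \<or> i = Suc j mod m)}"

definition orientation :: "'a set \<Rightarrow> ('a \<times> 'a) set \<Rightarrow> ('a \<times> 'a) set \<Rightarrow> bool" where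
  "orientation V E D \<longleftrightarrow> D \<subseteq> E \<and> (\<forall>u v. (u,v) \<in> E \<longrightarrow> ((u,v) \<in> D \<longleftrightarrow> (v,u) \<notin> D))"

definition oriented_graph :: "'a set \<Rightarrow> ('a \<times> 'a) set \<Rightarrow> bool" where
  "oriented_graph S A \<longleftrightarrow> A \<subseteq> S \<times> S \<and> irrefl A \<and> (\<forall>u v. (u,v) \<in> A \<longrightarrow> (v,u) \<notin> A)"

(* A is the arc set of the oriented path Q_n on vertices q_i = i, i < n *)
definition Q_path :: "nat \<Rightarrow> (nat \<times> nat) set \<Rightarrow> bool" where
  "Q_path n A \<longleftrightarrow>
     (\<forall>i j. (i,j) \<in> A \<longrightarrow> i < n \<and> j < n \<and> (j = Suc i \<or> i = Suc j)) \<and>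
     (\<forall>i. Suc i < n \<longrightarrow> ((i, Suc i) \<in> A \<longleftrightarrow> (Suc i, i) \<notin> A)) \<and>
     (0, 1) \<in> A \<and> (1, 2) \<in> A \<and>
     (\<forall>i. 1 \<le> i \<and> i + 1 \<le> n - 3 \<longrightarrow>
          ((i, Suc i) \<in> A \<longleftrightarrow> (Suc (Suc i), Suc i) \<in> A)) \<and>
     ((n-3, n-2) \<in> A \<longleftrightarrow> (n-2, n-1) \<in> A)"

(* (S,A) is (isomorphic to) a member of F_n *)
definition in_F :: "nat \<Rightarrow> 'a set \<Rightarrow> ('a \<times> 'a) set \<Rightarrow> bool" where
  "in_F n S A \<longleftrightarrow> oriented_graph S A \<and>
     (\<exists>QA g. Q_path n QA \<and> graph_hom {0..<n} QA S A g \<and> g ` {0..<n} = S)"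

definition dicycle_iso :: "nat \<Rightarrow> 'a set \<Rightarrow> ('a \<times> 'a) set \<Rightarrow> bool" where
  "dicycle_iso k S A \<longleftrightarrow>
     (\<exists>h. bij_betw h {0..<k} S \<and> A = {(h i, h (Suc i mod k)) | i. i < k})"

end

theory Submission
  imports Defs
begin

(* Let m = n - 1, which is odd. Orient C_m as m-1 \<rightarrow> 0 \<rightarrow> 1, every other even vertex a source and
   every odd vertex a sink. In a homomorphic image of Q_n in this orientation, q_1 must go to 0, the
   alternating middle part of Q_n then moves away from 0 one step at a time without wrapping around,
   and the last two equally directed arcs cannot be accommodated. Pulling this orientation back along
   a homomorphism G \<rightarrow> C_m gives an acyclic orientation of G into which no Q_n maps; as homomorphic
   images of Q_n are exactly the members of F_n, and acyclicity excludes the directed 3- and 4-cycle,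
   this is the required orientation.

   Conversely, suppose no Q_n maps into an orientation D. Call a vertex middle if it has both an in-
   and an out-arc, and label each vertex by the least length k < n - 2 of an alternating walk
   (forward, backward, forward, ...) from a middle vertex to it; unlabelled vertices get n - 2 if they
   are sources and n - 3 if they are sinks. An alternating walk of odd length at most n - 3 ending in
   a middle vertex would extend to a homomorphic image of Q_n, and this makes every arc of D join
   consecutive labels modulo n - 1. *)

lemma acyclic_if_rank_increasing:
  fixes r :: "'a \<Rightarrow> 'b::order"
  assumes "\<And>a b. (a, b) \<in> R \<Longrightarrow> r a < r b"
  shows "acyclic R"
proof -
  have "r a < r b" if "(a, b) \<in> R\<^sup>+" for a b
    using that by (induction rule: trancl_induct) (auto dest: assms order.strict_trans)
  then show ?thesis
    by (auto simp: acyclic_def)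
qed

lemma dicycle_not_acyclic:
  assumes "dicycle_iso k S A" "0 < k"
  shows "\<not> acyclic A"
proof -
  obtain h where A: "A = {(h i, h (Suc i mod k)) | i. i < k}"
    using assms(1) by (auto simp: dicycle_iso_def)
  have path: "(h 0, h (Suc i)) \<in> A\<^sup>+" if "Suc i < k" for i
    using that
  proof (induction i)
    case 0
    then show ?case
      unfolding A by (intro r_into_trancl) (auto intro!: exI[of _ 0])
  next
    case (Suc i)
    have "(h (Suc i), h (Suc (Suc i))) \<in> A"
      unfolding A using Suc.prems by (auto intro!: exI[of _ "Suc i"])
    with Suc show ?case
      by (meson Suc_lessD trancl_into_trancl)
  qed
  have closing_arc: "(h (k - 1), h 0) \<in> A"
    unfolding A using assms(2) by (auto intro!: exI[of _ "k - 1"])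
  have "(h 0, h 0) \<in> A\<^sup>+"
  proof (cases "k = 1")
    case False
    then have "(h 0, h (k - 1)) \<in> A\<^sup>+"
      using path[of "k - 2"] assms(2) by (simp add: Suc_diff_Suc numeral_2_eq_2)
    then show ?thesis
      using closing_arc by (rule trancl_into_trancl)
  qed (use closing_arc in auto)
  then show ?thesis
    by (auto simp: acyclic_def)
qed

lemma cycle_edges_iff:
  "(a, b) \<in> cycle_edges m \<longleftrightarrow> a < m \<and> b < m \<and>
     (b = Suc a \<or> a = Suc b \<or> (a = m - 1 \<and> b = 0) \<or> (b = m - 1 \<and> a = 0))"
  by (auto simp: cycle_edges_def mod_Suc)

lemma sym_cycle_edges: "sym (cycle_edges m)"
  by (auto simp: cycle_edges_def sym_def)

lemma orientation_pullback:
  assumes "graph_hom V E W F f" "sym E" "orientation W F T"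
  shows "orientation V E {(u, v) \<in> E. (f u, f v) \<in> T}"
proof -
  have flip: "(f u, f v) \<in> T \<longleftrightarrow> (f v, f u) \<notin> T" if "(u, v) \<in> E" for u v
    using assms(1,3) that by (auto simp: graph_hom_def orientation_def)
  show ?thesis
    unfolding orientation_def
  proof (intro conjI allI impI)
    fix u v
    assume uv: "(u, v) \<in> E"
    then have "(v, u) \<in> E"
      using assms(2) by (auto dest: symD)
    with uv flip show "(u, v) \<in> {(u, v) \<in> E. (f u, f v) \<in> T} \<longleftrightarrow>
        (v, u) \<notin> {(u, v) \<in> E. (f u, f v) \<in> T}"
      by blast
  qed blast
qed

definition Q_maps_into :: "nat \<Rightarrow> ('a \<times> 'a) set \<Rightarrow> bool" where
  "Q_maps_into n D \<longleftrightarrow> (\<exists>QA g. Q_path n QA \<and> (\<forall>(i, j)\<in>QA. (g i, g j) \<in> D))"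

lemma Q_path_incident_arc:
  assumes "Q_path n QA" "i < n"
  shows "\<exists>j. (i, j) \<in> QA \<or> (j, i) \<in> QA"
proof (cases "Suc i < n")
  case True
  then show ?thesis
    using assms(1) unfolding Q_path_def by blast
next
  case False
  have "(0, 1) \<in> QA"
    using assms(1) by (simp add: Q_path_def)
  then have "1 < n"
    using assms(1) unfolding Q_path_def by blast
  with False assms(2) have "i = Suc (i - 1)" "Suc (i - 1) < n"
    by auto
  then show ?thesis
    using assms(1) unfolding Q_path_def by metis
qed

lemma ex_in_F_iff_Q_maps_into:
  assumes "D \<subseteq> V \<times> V" "asym D"
  shows "(\<exists>S\<subseteq>V. in_F n S (D \<inter> S \<times> S)) \<longleftrightarrow> Q_maps_into n D"
  unfolding Q_maps_into_def
proof
  assume "\<exists>S\<subseteq>V. in_F n S (D \<inter> S \<times> S)"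
  then show "\<exists>QA g. Q_path n QA \<and> (\<forall>(i, j)\<in>QA. (g i, g j) \<in> D)"
    by (fastforce simp: in_F_def graph_hom_def)
next
  assume "\<exists>QA g. Q_path n QA \<and> (\<forall>(i, j)\<in>QA. (g i, g j) \<in> D)"
  then obtain QA g where Q: "Q_path n QA" and hom: "\<forall>(i, j)\<in>QA. (g i, g j) \<in> D"
    by blast
  let ?S = "g ` {0..<n}"
  have "?S \<subseteq> V"
  proof
    fix x
    assume "x \<in> ?S"
    then obtain i where "i < n" "x = g i"
      by auto
    with Q_path_incident_arc[OF Q] obtain j where "(i, j) \<in> QA \<or> (j, i) \<in> QA"
      by blast
    with hom assms(1) \<open>x = g i\<close> show "x \<in> V"
      by blast
  qed
  moreover have "in_F n ?S (D \<inter> ?S \<times> ?S)"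
    unfolding in_F_def
  proof (intro conjI exI)
    show "oriented_graph ?S (D \<inter> ?S \<times> ?S)"
      using assms(2) by (auto simp: oriented_graph_def asym_iff irrefl_def)
    have "i < n \<and> j < n" if "(i, j) \<in> QA" for i j
      using Q that by (simp add: Q_path_def)
    then show "graph_hom {0..<n} QA ?S (D \<inter> ?S \<times> ?S) g"
      using hom by (auto simp: graph_hom_def)
  qed (use Q in auto)
  ultimately show "\<exists>S\<subseteq>V. in_F n S (D \<inter> S \<times> S)"
    by blast
qed

lemma acyclic_orientation_F_free_iff_not_Q_maps_into:
  assumes "E \<subseteq> V \<times> V" "orientation V E D" "acyclic D"
  shows "(\<forall>S. S \<subseteq> V \<longrightarrow> in_F n S (D \<inter> (S \<times> S)) \<longrightarrow>
            dicycle_iso 3 S (D \<inter> (S \<times> S)) \<or> dicycle_iso 4 S (D \<inter> (S \<times> S)))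
         \<longleftrightarrow> \<not> Q_maps_into n D"
proof -
  have "\<not> dicycle_iso k S (D \<inter> S \<times> S)" if "0 < k" for k S
    using dicycle_not_acyclic[OF _ that] acyclic_subset[OF assms(3), of "D \<inter> S \<times> S"] by blast
  moreover have "D \<subseteq> V \<times> V" "asym D"
    using assms(1,2) by (auto simp: orientation_def asym_iff)
  ultimately show ?thesis
    using ex_in_F_iff_Q_maps_into[of D V n] by auto
qed

definition zigzag_cycle :: "nat \<Rightarrow> (nat \<times> nat) set" where
  "zigzag_cycle m = {(a, b). a < m \<and> b < m \<and>
     ((a = 0 \<and> b = 1) \<or> (a = m - 1 \<and> b = 0) \<or>
      (even a \<and> 2 \<le> a \<and> b = a + 1) \<or> (odd b \<and> a = b + 1))}"

lemma orientation_zigzag_cycle: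
  assumes "odd m" "3 \<le> m"
  shows "orientation {0..<m} (cycle_edges m) (zigzag_cycle m)"
  using assms unfolding orientation_def zigzag_cycle_def
  by (auto simp: cycle_edges_iff)

definition zigzag_rank :: "nat \<Rightarrow> nat" where
  "zigzag_rank a = (if a = 0 then 1 else if odd a then 2 else 0)"

lemma zigzag_rank_increasing:
  assumes "odd m" "3 \<le> m" "(a, b) \<in> zigzag_cycle m"
  shows "zigzag_rank a < zigzag_rank b"
proof -
  have "even (m - 1)" "m - 1 \<noteq> 0"
    using assms(1,2) by auto
  with assms(3) show ?thesis
    by (auto simp: zigzag_cycle_def zigzag_rank_def)
qed

lemma Q_path_forward_iff_odd:
  assumes "Q_path n QA" "1 \<le> i" "i \<le> n - 3"
  shows "(i, Suc i) \<in> QA \<longleftrightarrow> odd i"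
  using assms(2,3)
proof (induction i rule: dec_induct)
  case base
  then show ?case
    using assms(1) by (simp add: Q_path_def numeral_2_eq_2)
next
  case (step i)
  then have "(i, Suc i) \<in> QA \<longleftrightarrow> (Suc (Suc i), Suc i) \<in> QA"
    "(Suc i, Suc (Suc i)) \<in> QA \<longleftrightarrow> (Suc (Suc i), Suc i) \<notin> QA"
    using assms(1) unfolding Q_path_def by auto
  with step show ?case
    by simp
qed

lemma not_Q_maps_into_zigzag_cycle:
  assumes n: "even n" "4 \<le> n"
  shows "\<not> Q_maps_into n (zigzag_cycle (n - 1))"
proof
  assume "Q_maps_into n (zigzag_cycle (n - 1))"
  then obtain QA h where Q: "Q_path n QA"
    and hom: "\<And>i j. (i, j) \<in> QA \<Longrightarrow> (h i, h j) \<in> zigzag_cycle (n - 1)"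
    unfolding Q_maps_into_def by fast
  have source_even: "even (h i)" if "(i, j) \<in> QA" for i j
    using hom[OF that] n by (auto simp: zigzag_cycle_def)
  have target_odd: "h j = 0 \<or> odd (h j)" if "(i, j) \<in> QA" for i j
    using hom[OF that] by (auto simp: zigzag_cycle_def)
  have dir: "(i, Suc i) \<in> QA \<longleftrightarrow> (Suc i, i) \<notin> QA" if "Suc i < n" for i
    using Q that by (auto simp: Q_path_def)
  have "(0, 1) \<in> QA" "(1, 2) \<in> QA"
    using Q by (auto simp: Q_path_def)
  then have h1: "h 1 = 0"
    using source_even target_odd by fastforce
  \<comment> \<open>Each step of the alternating middle part moves h by one along the cycle,
    never across the arc n - 2 \<rightarrow> 0.\<close>
  have below: "h i < i \<and> odd (h i + i)" if "1 \<le> i" "i \<le> n - 2" for i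
    using that
  proof (induction i rule: dec_induct)
    case base
    then show ?case
      using h1 by simp
  next
    case (step i)
    then have IH: "h i < i" "odd (h i + i)" and i: "i \<le> n - 3"
      by auto
    have pattern: "(i, Suc i) \<in> QA \<longleftrightarrow> odd i"
      using Q_path_forward_iff_odd[OF Q step.hyps(1) i] .
    have no_wrap: "h i + 3 \<le> n - 1"
      using IH i by linarith
    show ?case
    proof (cases "(i, Suc i) \<in> QA")
      case True
      then have "even (h i)" "h (Suc i) = Suc (h i) \<or> Suc (h (Suc i)) = h i"
        using hom[OF True] no_wrap by (auto simp: zigzag_cycle_def)
      with IH show ?thesis
        by presburger
    next
      case False
      then have "(Suc i, i) \<in> QA"
        using dir[of i] i n by linarith
      then have "h i = Suc (h (Suc i)) \<or> h (Suc i) = Suc (h i)"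
        using hom pattern False IH by (fastforce simp: zigzag_cycle_def)
      with IH show ?thesis
        by presburger
    qed
  qed
  have "Suc (n - 3) = n - 2"
    using n by simp
  then have "(n - 3, n - 2) \<in> QA"
    using Q_path_forward_iff_odd[OF Q, of "n - 3"] n by simp
  then have "(n - 2, n - 1) \<in> QA"
    using Q by (simp add: Q_path_def)
  then have "even (h (n - 2))"
    by (rule source_even)
  moreover have "odd (h (n - 2) + (n - 2))"
    using below[of "n - 2"] n by simp
  ultimately show False
    using n by simp
qed

lemma Q_maps_into_hom:
  assumes "Q_maps_into n D" "\<And>u v. (u, v) \<in> D \<Longrightarrow> (f u, f v) \<in> T"
  shows "Q_maps_into n T"
proof -
  obtain QA g where "Q_path n QA" "\<forall>(i, j)\<in>QA. (g i, g j) \<in> D"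
    using assms(1) by (auto simp: Q_maps_into_def)
  with assms(2) show ?thesis
    unfolding Q_maps_into_def by (intro exI[of _ QA] exI[of _ "f \<circ> g"]) auto
qed

lemma cycle_hom_imp_acyclic_orientation_not_Q_maps_into:
  assumes "sym E" "even n" "4 \<le> n" and f: "graph_hom V E {0..<n-1} (cycle_edges (n-1)) f"
  shows "\<exists>D. orientation V E D \<and> acyclic D \<and> \<not> Q_maps_into n D"
proof (intro exI conjI)
  let ?D = "{(u, v) \<in> E. (f u, f v) \<in> zigzag_cycle (n - 1)}"
  have m: "odd (n - 1)" "3 \<le> n - 1"
    using assms(2,3) by auto
  show "orientation V E ?D"
    using orientation_pullback[OF f assms(1) orientation_zigzag_cycle[OF m]] .
  show "acyclic ?D"
    by (rule acyclic_if_rank_increasing[where r = "zigzag_rank \<circ> f"])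
      (auto intro: zigzag_rank_increasing[OF m])
  show "\<not> Q_maps_into n ?D"
    using not_Q_maps_into_zigzag_cycle[OF assms(2,3)] Q_maps_into_hom[of n ?D f] by blast
qed

definition canonical_Q_arcs :: "nat \<Rightarrow> (nat \<times> nat) set" where
  "canonical_Q_arcs n =
     {(i, Suc i) | i. Suc i < n \<and> (i = 0 \<or> odd i \<or> i = n - 2)} \<union>
     {(Suc i, i) | i. 2 \<le> i \<and> i \<le> n - 3 \<and> even i}"

lemma Q_path_canonical_Q_arcs:
  assumes "even n" "4 \<le> n"
  shows "Q_path n (canonical_Q_arcs n)"
proof -
  have "Suc (n - 3) = n - 2" "Suc (n - 2) = n - 1"
    using assms(2) by auto
  then show ?thesis
    using assms unfolding Q_path_def canonical_Q_arcs_def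
    by (auto simp: numeral_2_eq_2) presburger+
qed

fun alt_reach :: "('a \<times> 'a) set \<Rightarrow> 'a set \<Rightarrow> nat \<Rightarrow> 'a set" where
  "alt_reach D M 0 = M"
| "alt_reach D M (Suc k) = (if even k then D `` alt_reach D M k else D\<inverse> `` alt_reach D M k)"

lemma alt_reach_odd_subset_Range: "odd k \<Longrightarrow> alt_reach D M k \<subseteq> Range D"
  by (cases k) auto

lemma alt_reach_even_subset_Domain:
  "M \<subseteq> Domain D \<Longrightarrow> even k \<Longrightarrow> alt_reach D M k \<subseteq> Domain D"
  by (cases k) auto

lemma alt_reach_odd_subset_Suc_Suc:
  assumes "odd k"
  shows "alt_reach D M k \<subseteq> alt_reach D M (Suc (Suc k))"
proof
  fix x
  assume x: "x \<in> alt_reach D M k"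
  \<comment> \<open>An odd-level vertex has an in-neighbour, so the walk can step back and forth.\<close>
  then obtain u where ux: "(u, x) \<in> D"
    using alt_reach_odd_subset_Range[OF assms] by (meson RangeE subsetD)
  have "x \<in> D `` D\<inverse> `` alt_reach D M k"
    using ImageI[OF ux ImageI[OF converseI[OF ux] x]] .
  then show "x \<in> alt_reach D M (Suc (Suc k))"
    using assms by simp
qed

lemma alt_reach_odd_mono:
  assumes "odd k" "k \<le> l" "odd l"
  shows "alt_reach D M k \<subseteq> alt_reach D M l"
proof -
  have "alt_reach D M k \<subseteq> alt_reach D M (k + 2 * d)" for d
  proof (induction d)
    case (Suc d)
    have "alt_reach D M (k + 2 * d) \<subseteq> alt_reach D M (Suc (Suc (k + 2 * d)))"
      by (rule alt_reach_odd_subset_Suc_Suc) (use assms(1) in simp)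
    with Suc.IH show ?case
      by simp
  qed simp
  moreover have "even (l - k)"
    using assms by simp
  then obtain d where "l = k + 2 * d"
    using assms(2) by (metis evenE le_add_diff_inverse)
  ultimately show ?thesis
    by blast
qed

lemma alt_reach_walk:
  assumes "v \<in> alt_reach D M k"
  shows "\<exists>w. w 1 \<in> M \<and> w (Suc k) = v \<and>
           (\<forall>i\<in>{1..k}. (if odd i then (w i, w (Suc i)) else (w (Suc i), w i)) \<in> D)"
  using assms
proof (induction k arbitrary: v)
  case 0
  then show ?case
    by (intro exI[of _ "\<lambda>_. v"]) simp
next
  case (Suc k)
  then obtain u where u: "u \<in> alt_reach D M k"
    "(if odd (Suc k) then (u, v) else (v, u)) \<in> D"
    by (auto split: if_splits)
  from Suc.IH[OF u(1)] obtain w where w: "w 1 \<in> M" "w (Suc k) = u"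
    "\<forall>i\<in>{1..k}. (if odd i then (w i, w (Suc i)) else (w (Suc i), w i)) \<in> D"
    by blast
  define w' where "w' = w(Suc (Suc k) := v)"
  have "(if odd i then (w' i, w' (Suc i)) else (w' (Suc i), w' i)) \<in> D" if "i \<in> {1..Suc k}" for i
  proof (cases "i = Suc k")
    case False
    with that have "i \<in> {1..k}"
      by auto
    then have "(if odd i then (w i, w (Suc i)) else (w (Suc i), w i)) \<in> D"
      using w(3) by blast
    moreover have "w' i = w i" "w' (Suc i) = w (Suc i)"
      using \<open>i \<in> {1..k}\<close> by (auto simp: w'_def)
    ultimately show ?thesis
      by (cases "odd i") simp_all
  next
    case True
    then show ?thesis
      using w(2) u(2) by (cases "even k") (simp_all add: w'_def)
  qed
  then show ?case
    by (intro exI[of _ w']) (use w(1) in \<open>auto simp: w'_def\<close>)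
qed

lemma canonical_Q_arcs_hom_of_alt_walk:
  assumes n: "even n" "4 \<le> n" and a: "(a, w 1) \<in> D" and z: "(w (n - 2), z) \<in> D"
    and walk: "\<forall>i\<in>{1..n - 3}. (if odd i then (w i, w (Suc i)) else (w (Suc i), w i)) \<in> D"
  shows "\<forall>(i, j)\<in>canonical_Q_arcs n. ((w(0 := a, n - 1 := z)) i, (w(0 := a, n - 1 := z)) j) \<in> D"
proof (intro ballI, clarify)
  fix i j
  assume ij: "(i, j) \<in> canonical_Q_arcs n"
  have "i \<le> n - 3" if "odd i" "Suc i < n"
    using that n by presburger
  with ij consider "j = Suc i" "i = 0" | "j = Suc i" "i = n - 2" | "j = Suc i" "odd i" "i \<in> {1..n - 3}"
    | "i = Suc j" "j \<in> {1..n - 3}" "even j"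
    unfolding canonical_Q_arcs_def by fastforce
  then show "((w(0 := a, n - 1 := z)) i, (w(0 := a, n - 1 := z)) j) \<in> D"
  proof cases
    case 1
    then show ?thesis
      using a n by auto
  next
    case 2
    then show ?thesis
      using z n by auto
  next
    case 3
    then show ?thesis
      using walk[rule_format, of i] n by auto
  next
    case 4
    then show ?thesis
      using walk[rule_format, of j] n by auto
  qed
qed

locale Q_free_digraph =
  fixes D :: "('a \<times> 'a) set" and n :: nat
  assumes n: "even n" "4 \<le> n"
    and not_Q_maps_into: "\<not> Q_maps_into n D"
begin

abbreviation middle :: "'a set" where
  "middle \<equiv> Domain D \<inter> Range D"

abbreviation reach :: "nat \<Rightarrow> 'a set" where
  "reach \<equiv> alt_reach D middle"

lemma no_odd_return:
  assumes y: "y \<in> middle" "y \<in> reach k" and k: "odd k" "k \<le> n - 3"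
  shows False
proof -
  \<comment> \<open>Pad the walk to length n - 3 and add an arc into its start and out of its end: a copy of Q_n.\<close>
  have "odd (n - 3)" and shift: "Suc (n - 3) = n - 2"
    using n by auto
  then have "y \<in> reach (n - 3)"
    using subsetD[OF alt_reach_odd_mono[OF k] y(2)] by simp
  from alt_reach_walk[OF this, unfolded shift] obtain w where w: "w 1 \<in> middle" "w (n - 2) = y"
    "\<forall>i\<in>{1..n - 3}. (if odd i then (w i, w (Suc i)) else (w (Suc i), w i)) \<in> D"
    by (elim exE conjE)
  obtain a z where "(a, w 1) \<in> D" "(w (n - 2), z) \<in> D"
    using w(1,2) y(1) by (meson DomainE RangeE IntE)
  then have "\<forall>(i, j)\<in>canonical_Q_arcs n. ((w(0 := a, n - 1 := z)) i, (w(0 := a, n - 1 := z)) j) \<in> D"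
    using canonical_Q_arcs_hom_of_alt_walk[OF n _ _ w(3)] by blast
  then have "Q_maps_into n D"
    unfolding Q_maps_into_def using Q_path_canonical_Q_arcs[OF n] by blast
  with not_Q_maps_into show False
    by contradiction
qed

definition level :: "'a \<Rightarrow> nat" where
  "level v = (LEAST k. v \<in> reach k)"

lemma level_le: "v \<in> reach k \<Longrightarrow> level v \<le> k"
  unfolding level_def by (rule Least_le)

lemma reach_level: "v \<in> reach k \<Longrightarrow> v \<in> reach (level v)"
  unfolding level_def by (rule LeastI)

lemma level_middle: "v \<in> middle \<Longrightarrow> level v = 0"
  using level_le[of v 0] by simp

lemma even_level_if_Domain:
  assumes "v \<in> reach k" "v \<in> Domain D"
  shows "even (level v)"
proof (rule ccontr)
  assume "odd (level v)"
  then have "v \<in> Range D"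
    using alt_reach_odd_subset_Range reach_level[OF assms(1)] by (meson subsetD)
  with assms(2) \<open>odd (level v)\<close> show False
    using level_middle by simp
qed

lemma middle_if_even_level:
  assumes "v \<in> reach k" "v \<in> Range D" "even (level v)"
  shows "v \<in> middle"
proof -
  have "v \<in> Domain D"
    using alt_reach_even_subset_Domain[OF _ assms(3)] reach_level[OF assms(1)] by (meson inf_le1 subsetD)
  then show ?thesis
    using assms(2) by (rule IntI)
qed

definition cycle_label :: "'a \<Rightarrow> nat" where
  "cycle_label v =
     (if \<exists>k < n - 2. v \<in> reach k then level v else if v \<in> Domain D then n - 2 else n - 3)"

lemma cycle_label_less: "cycle_label v < n - 1"
proof (cases "\<exists>k < n - 2. v \<in> reach k")
  case True
  then show ?thesis
    using level_le n by (fastforce simp: cycle_label_def)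
qed (use n in \<open>auto simp: cycle_label_def\<close>)

lemma cycle_label_reached:
  assumes "v \<in> reach k" "k < n - 2"
  shows "cycle_label v = level v"
proof -
  have "\<exists>k < n - 2. v \<in> reach k"
    using assms by auto
  then show ?thesis
    by (simp add: cycle_label_def)
qed

lemma cycle_label_arc_from_reached:
  assumes uv: "(u, v) \<in> D" and u: "u \<in> reach k" "k < n - 2"
  shows "(cycle_label u, cycle_label v) \<in> cycle_edges (n - 1)"
proof -
  have "u \<in> reach (level u)" "level u \<le> k"
    using reach_level[OF u(1)] level_le[OF u(1)] .
  moreover have "even (level u)"
    using even_level_if_Domain[OF u(1)] uv by blast
  ultimately have v: "v \<in> reach (Suc (level u))" and up: "Suc (level u) \<le> n - 3"
    using uv u(2) n by auto presburger
  have "odd (level v)"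
  proof (rule ccontr)
    assume "\<not> odd (level v)"
    then have "v \<in> middle"
      using middle_if_even_level[OF v] uv by blast
    then show False
      using no_odd_return[OF _ v _ up] \<open>even (level u)\<close> by simp
  qed
  then have "u \<in> reach (Suc (level v))"
    using reach_level[OF v] uv by auto
  then have "level u \<le> Suc (level v)"
    by (rule level_le)
  moreover have "level v \<le> Suc (level u)"
    using level_le[OF v] .
  ultimately have "level v = Suc (level u) \<or> level u = Suc (level v)"
    using \<open>even (level u)\<close> \<open>odd (level v)\<close> by presburger
  moreover have "cycle_label u = level u" "cycle_label v = level v"
    using cycle_label_reached[OF u] cycle_label_reached[OF v] up by auto
  ultimately show ?thesis
    using up n by (auto simp: cycle_edges_iff)
qed

lemma cycle_label_arc_from_unreached:
  assumes uv: "(u, v) \<in> D" and u: "\<not> (\<exists>k < n - 2. u \<in> reach k)"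
  shows "(cycle_label u, cycle_label v) \<in> cycle_edges (n - 1)"
proof -
  have label_u: "cycle_label u = n - 2"
    using u DomainI[OF uv] by (auto simp: cycle_label_def)
  show ?thesis
  proof (cases "\<exists>k < n - 2. v \<in> reach k")
    case True
    then obtain k where v: "v \<in> reach k" "k < n - 2"
      by auto
    have "level v = 0 \<or> odd (level v)"
    proof (cases "odd (level v)")
      case False
      then have "v \<in> middle"
        using middle_if_even_level[OF v(1) RangeI[OF uv]] by simp
      then show ?thesis
        using level_middle by simp
    qed simp
    moreover have "level v = n - 3" if "odd (level v)"
    proof -
      have "u \<in> reach (Suc (level v))"
        using reach_level[OF v(1)] uv that by auto
      with u have "n - 2 \<le> Suc (level v)"
        by (meson not_le)
      with level_le[OF v(1)] v(2) show ?thesis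
        by linarith
    qed
    ultimately show ?thesis
      using label_u cycle_label_reached[OF v] n by (auto simp: cycle_edges_iff)
  next
    case False
    have "v \<notin> Domain D"
    proof
      assume "v \<in> Domain D"
      then have "v \<in> reach 0"
        using RangeI[OF uv] by simp
      moreover have "0 < n - 2"
        using n by simp
      ultimately show False
        using False by blast
    qed
    with False have "cycle_label v = n - 3"
      by (auto simp: cycle_label_def)
    with label_u n show ?thesis
      by (auto simp: cycle_edges_iff)
  qed
qed

lemma cycle_label_arc:
  assumes "(u, v) \<in> D"
  shows "(cycle_label u, cycle_label v) \<in> cycle_edges (n - 1)"
  using cycle_label_arc_from_reached[OF assms] cycle_label_arc_from_unreached[OF assms] by blast

end

lemma not_Q_maps_into_imp_cycle_hom:
  assumes "orientation V E D" "even n" "4 \<le> n" "\<not> Q_maps_into n D"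
  shows "\<exists>f. graph_hom V E {0..<n-1} (cycle_edges (n-1)) f"
proof -
  interpret Q_free_digraph D n
    using assms(2-4) by unfold_locales
  have "(cycle_label u, cycle_label v) \<in> cycle_edges (n - 1)" if "(u, v) \<in> E" for u v
    using assms(1) that cycle_label_arc sym_cycle_edges
    by (metis orientation_def symD)
  then show ?thesis
    using cycle_label_less by (auto simp: graph_hom_def)
qed

theorem mainTheorem12:
  fixes V :: "'a set" and E :: "('a \<times> 'a) set" and n :: nat
  assumes "finite V" and "ugraph V E" and "even n" and "n \<ge> 4"
  shows "(\<exists>f. graph_hom V E {0..<n-1} (cycle_edges (n-1)) f) \<longleftrightarrow>
         (\<exists>D. orientation V E D \<and> acyclic D \<and>
              (\<forall>S. S \<subseteq> V \<longrightarrow> in_F n S (D \<inter> (S \<times> S)) \<longrightarrow>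
                   dicycle_iso 3 S (D \<inter> (S \<times> S)) \<or> dicycle_iso 4 S (D \<inter> (S \<times> S))))"
    (is "?hom \<longleftrightarrow> (\<exists>D. orientation V E D \<and> acyclic D \<and> ?F_free D)")
proof -
  have E: "E \<subseteq> V \<times> V" "sym E"
    using assms(2) by (auto simp: ugraph_def)
  show ?thesis
  proof
    assume ?hom
    then obtain D where "orientation V E D" "acyclic D" "\<not> Q_maps_into n D"
      using cycle_hom_imp_acyclic_orientation_not_Q_maps_into[OF E(2) assms(3,4)] by blast
    with acyclic_orientation_F_free_iff_not_Q_maps_into[OF E(1)]
    show "\<exists>D. orientation V E D \<and> acyclic D \<and> ?F_free D"
      by blast
  next
    assume "\<exists>D. orientation V E D \<and> acyclic D \<and> ?F_free D"
    then obtain D where "orientation V E D" "\<not> Q_maps_into n D"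
      using acyclic_orientation_F_free_iff_not_Q_maps_into[OF E(1)] by blast
    with assms(3,4) show ?hom
      using not_Q_maps_into_imp_cycle_hom by blast
  qed
qed

end
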